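(* Fix $\delta\le 1/T$ and, for each context $\mathbf{z}$, a set $\mathcal{E}_{\mathbf{z}}=\mathcal{E}_{\mathbf{z}}(\delta)$ of $\delta$-approximate extreme points. For any sequence of contexts $\mathbf{z}_1,\ldots,\mathbf{z}_T$, any sequence of followers $f_1,\ldots,f_T$ and any leader policy $\pi$, there exists a policy $\pi^{(\mathcal{E})}:\mathcal{Z}\to\bigcup_{\mathbf{z}\in\mathcal{Z}}\mathcal{E}_{\mathbf{z}}$ with $\pi^{(\mathcal{E})}(\mathbf{z})\in\mathcal{E}_{\mathbf{z}}$ for every $\mathbf{z}$, such that $$\sum_{t=1}^T u(\mathbf{z}_t,\pi(\mathbf{z}_t),b_{f_t}(\mathbf{z}_t,\pi(\mathbf{z}_t)))-u(\mathbf{z}_t,\pi^{(\mathcal{E})}(\mathbf{z}_t),b_{f_t}(\mathbf{z}_t,\pi^{(\mathcal{E})}(\mathbf{z}_t)))\le 1.$$ Moreover, the same holds in expectation over any distribution $\mathcal{F}$ over follower types: for any contexts $\mathbf{z}_1,\dots,\mathbf{z}_T$ and any policy $\pi$ there is such a $\pi^{(\mathcal{E})}$ with $\sum_{t=1}^T\mathbb{E}_{f_t\sim\mathcal{F}}[u(\mathbf{z}_t,\pi(\mathbf{z}_t),b_{f_t}(\mathbf{z}_t,\pi(\mathbf{z}_t)))-u(\mathbf{z}_t,\pi^{(\mathcal{E})}(\mathbf{z}_t),b_{f_t}(\mathbf{z}_t,\pi^{(\mathcal{E})}(\mathbf{z}_t)))]\le 1$.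
   Context: Finite leader action set $\mathcal{A}$, finite follower action set $\mathcal{A}_f$, context space $\mathcal{Z}\subseteq\mathbb{R}^d$, follower types $\alpha^{(1)},\ldots,\alpha^{(K)}$ with utilities $u_{\alpha^{(i)}}:\mathcal{Z}\times\mathcal{A}\times\mathcal{A}_f\to[0,1]$, leader utility $u:\mathcal{Z}\times\mathcal{A}\times\mathcal{A}_f\to[0,1]$, mixed strategies $\mathbf{x}\in\mathcal{X}=\Delta(\mathcal{A})$, $u(\mathbf{z},\mathbf{x},a_f)=\sum_{a_l}\mathbf{x}[a_l]u(\mathbf{z},a_l,a_f)$. Best response: $b_f(\mathbf{z},\mathbf{x})\in\arg\max_{a_f}\sum_{a_l}\mathbf{x}[a_l]u_f(\mathbf{z},a_l,a_f)$, ties broken by a fixed known ordering over $\mathcal{A}_f$. A policy is a map $\mathcal{Z}\to\mathcal{X}$. For a type $\alpha^{(i)}$, action $a_f$ and context $\mathbf{z}$, $\mathcal{X}_{\mathbf{z}}(\alpha^{(i)},a_f)=\{\mathbf{x}\in\mathcal{X}:b_{\alpha^{(i)}}(\mathbf{z},\mathbf{x})=a_f\}$; for a function $\sigma:\{\alpha^{(1)},\ldots,\alpha^{(K)}\}\to\mathcal{A}_f$, the contextual best-response region is $\mathcal{X}_{\mathbf{z}}(\sigma)=\bigcap_{i\in[K]}\mathcal{X}_{\mathbf{z}}(\alpha^{(i)},\sigma(\alpha^{(i)}))$. $\delta$-approximate extreme points: for $\delta>0$ and context $\mathbf{z}$, $\mathcal{E}_{\mathbf{z}}(\delta)$ is a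 set of mixed strategies such that for every $\sigma$ with $\mathcal{X}_{\mathbf{z}}(\sigma)\neq\emptyset$ and every extreme point $\mathbf{x}$ of the closure $\mathrm{cl}(\mathcal{X}_{\mathbf{z}}(\sigma))$: if $\mathbf{x}\in\mathcal{X}_{\mathbf{z}}(\sigma)$ then $\mathbf{x}\in\mathcal{E}_{\mathbf{z}}(\delta)$; otherwise there is $\mathbf{x}'\in\mathcal{E}_{\mathbf{z}}(\delta)\cap\mathcal{X}_{\mathbf{z}}(\sigma)$ with $\|\mathbf{x}'-\mathbf{x}\|_1\le\delta$. *)

theory Defs
  imports "HOL-Analysis.Analysis" "HOL-Probability.Probability_Mass_Function"
begin

definition mixed :: "(real ^ 'a::finite) set" where
  "mixed = {x. (\<forall>a. 0 \<le> x $ a) \<and> (\<Sum>a\<in>UNIV. x $ a) = 1}"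

definition eu :: "('z \<Rightarrow> 'a::finite \<Rightarrow> 'f \<Rightarrow> real) \<Rightarrow> 'z \<Rightarrow> real ^ 'a \<Rightarrow> 'f \<Rightarrow> real" where
  "eu v z x af = (\<Sum>a\<in>UNIV. x $ a * v z a af)"

text \<open>Best response of a follower with utility v; ties are broken by the fixed
  known ordering of follower actions (the linear order of type 'f: the least
  maximiser is chosen).\<close>
definition br :: "('z \<Rightarrow> 'a::finite \<Rightarrow> 'f::{finite,linorder} \<Rightarrow> real) \<Rightarrow> 'z \<Rightarrow> real ^ 'a \<Rightarrow> 'f" where
  "br v z x = (LEAST af. \<forall>af'. eu v z x af' \<le> eu v z x af)"

definition br_region :: "('k \<Rightarrow> 'z \<Rightarrow> 'a::finite \<Rightarrow> 'f::{finite,linorder} \<Rightarrow> real) \<Rightarrow> 'z \<Rightarrow> 'k \<Rightarrow> 'f \<Rightarrow> (real ^ 'a) set" where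
  "br_region uf z k af = {x \<in> mixed. br (uf k) z x = af}"

definition cbr_region :: "('k \<Rightarrow> 'z \<Rightarrow> 'a::finite \<Rightarrow> 'f::{finite,linorder} \<Rightarrow> real) \<Rightarrow> 'z \<Rightarrow> ('k \<Rightarrow> 'f) \<Rightarrow> (real ^ 'a) set" where
  "cbr_region uf z \<sigma> = (\<Inter>k. br_region uf z k (\<sigma> k))"

definition l1dist :: "real ^ 'a::finite \<Rightarrow> real ^ 'a \<Rightarrow> real" where
  "l1dist x y = (\<Sum>a\<in>UNIV. \<bar>x $ a - y $ a\<bar>)"

definition approx_extreme_points :: "('k \<Rightarrow> 'z \<Rightarrow> 'a::finite \<Rightarrow> 'f::{finite,linorder} \<Rightarrow> real) \<Rightarrow> 'z \<Rightarrow> real \<Rightarrow> (real ^ 'a) set \<Rightarrow> bool" where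
  "approx_extreme_points uf z \<delta> E \<longleftrightarrow>
     E \<subseteq> mixed \<and>
     (\<forall>\<sigma>. cbr_region uf z \<sigma> \<noteq> {} \<longrightarrow>
        (\<forall>x. x extreme_point_of (closure (cbr_region uf z \<sigma>)) \<longrightarrow>
           (x \<in> cbr_region uf z \<sigma> \<longrightarrow> x \<in> E) \<and>
           (x \<notin> cbr_region uf z \<sigma> \<longrightarrow>
              (\<exists>x'\<in>E \<inter> cbr_region uf z \<sigma>. l1dist x' x \<le> \<delta>))))"

end

theory Submission
  imports Defs
begin

text \<open>Group the rounds by context. On a fixed context z, the leader's total expected utility
  over the rounds with context z, as long as every follower type keeps its best response to
  \<open>\<pi> z\<close>, is a linear function \<open>x \<mapsto> w \<bullet> x\<close> on the best-response region R containing \<open>\<pi> z\<close>,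
  with coefficients bounded by the number n of those rounds. Its maximum over the compact
  convex set \<open>closure R\<close> is attained at an extreme point e. If e lies in R it is itself in
  \<open>\<E>\<^sub>z\<close>; otherwise \<open>\<E>\<^sub>z \<inter> R\<close> has a point \<delta>-close to e in the l1 norm, losing at most
  n\<delta>. Summing over the contexts gives a loss of at most T\<delta> \<le> 1.\<close>

lemma br_eq_iff:
  fixes v :: "'z \<Rightarrow> 'a::finite \<Rightarrow> 'f::{finite,linorder} \<Rightarrow> real"
  shows "br v z x = b \<longleftrightarrow>
    (\<forall>af. eu v z x af \<le> eu v z x b) \<and> (\<forall>af<b. eu v z x af < eu v z x b)"
    (is "_ \<longleftrightarrow> ?best b \<and> _")
proof -
  have "Max (range (eu v z x)) \<in> range (eu v z x)"
    by (rule Max_in) auto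
  then obtain m where "eu v z x m = Max (range (eu v z x))"
    by (metis rangeE)
  then have "?best m"
    by (simp add: Max_ge)
  then have br_Min: "br v z x = Min {b. ?best b}"
    unfolding br_def by (intro Least_Min) auto
  have "{b. ?best b} \<noteq> {}"
    using \<open>?best m\<close> by blast
  show ?thesis
  proof
    assume br_b: "br v z x = b"
    have "?best b"
      using Min_in[OF _ \<open>{b. ?best b} \<noteq> {}\<close>] br_b br_Min by simp
    moreover have "eu v z x af < eu v z x b" if "af < b" for af
    proof -
      have "\<not> ?best af"
      proof
        assume "?best af"
        then have "Min {b. ?best b} \<le> af"
          by (intro Min_le) auto
        then show False
          using that br_b br_Min by simp
      qed
      then show ?thesis
        using \<open>?best b\<close> by (meson less_le_trans not_le)
    qed
    ultimately show "?best b \<and> (\<forall>af<b. eu v z x af < eu v z x b)"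
      by blast
  next
    assume b: "?best b \<and> (\<forall>af<b. eu v z x af < eu v z x b)"
    show "br v z x = b"
      unfolding br_def
      by (rule Least_equality) (use b in \<open>auto simp: not_less[symmetric]\<close>)
  qed
qed
lemma convex_br_eq: "convex {x. br v z x = b}"
proof -
  define g where "g af = (\<chi> a. v z a b - v z a af)" for af
  have g_inner: "g af \<bullet> x = eu v z x b - eu v z x af" for af x
    unfolding g_def eu_def inner_vec_def
    by (simp add: right_diff_distrib sum_subtractf mult.commute)
  have "{x. br v z x = b} = (\<Inter>af. {x. g af \<bullet> x \<ge> 0}) \<inter> (\<Inter>af\<in>{..<b}. {x. g af \<bullet> x > 0})"
    by (auto simp: br_eq_iff g_inner)
  then show ?thesis
    by (simp add: convex_Int convex_INT convex_halfspace_ge convex_halfspace_gt)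
qed

lemma convex_mixed: "convex (mixed :: (real ^ 'a::finite) set)"
  unfolding convex_def mixed_def
  by (auto simp: sum.distrib sum_distrib_left[symmetric] algebra_simps)

lemma bounded_mixed: "bounded (mixed :: (real ^ 'a::finite) set)"
proof -
  have "mixed \<subseteq> cball (0 :: real ^ 'a) 1"
  proof
    fix x :: "real ^ 'a"
    assume "x \<in> mixed"
    then show "x \<in> cball 0 1"
      using norm_le_l1_cart[of x] unfolding mixed_def by simp
  qed
  then show ?thesis
    using bounded_cball bounded_subset by blast
qed

lemma convex_cbr_region: "convex (cbr_region uf z \<sigma>)"
proof -
  have "br_region uf z k af = mixed \<inter> {x. br (uf k) z x = af}" for k af
    unfolding br_region_def by auto
  then show ?thesis
    unfolding cbr_region_def by (simp add: convex_INT convex_Int convex_mixed convex_br_eq)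
qed

lemma cbr_region_subset_mixed: "cbr_region uf z \<sigma> \<subseteq> mixed"
  unfolding cbr_region_def br_region_def by auto

lemma bounded_cbr_region: "bounded (cbr_region uf z \<sigma>)"
  using bounded_mixed cbr_region_subset_mixed by (rule bounded_subset)

lemma br_eq_if_mem_cbr_region: "x \<in> cbr_region uf z \<sigma> \<Longrightarrow> br (uf k) z x = \<sigma> k"
  unfolding cbr_region_def br_region_def by auto

lemma mem_cbr_region_br: "x \<in> mixed \<Longrightarrow> x \<in> cbr_region uf z (\<lambda>k. br (uf k) z x)"
  unfolding cbr_region_def br_region_def by auto

lemma l1dist_commute: "l1dist x y = l1dist y x"
  unfolding l1dist_def by (simp add: abs_minus_commute)

lemma inner_diff_le_l1dist:
  fixes w x y :: "real ^ 'a::finite"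
  assumes "\<And>a. \<bar>w $ a\<bar> \<le> W"
  shows "w \<bullet> x - w \<bullet> y \<le> W * l1dist x y"
proof -
  have "w \<bullet> x - w \<bullet> y = (\<Sum>a\<in>UNIV. w $ a * (x $ a - y $ a))"
    by (simp add: inner_vec_def sum_subtractf right_diff_distrib)
  also have "\<dots> \<le> (\<Sum>a\<in>UNIV. W * \<bar>x $ a - y $ a\<bar>)"
  proof (rule sum_mono)
    fix a
    have "w $ a * (x $ a - y $ a) \<le> \<bar>w $ a\<bar> * \<bar>x $ a - y $ a\<bar>"
      by (metis abs_ge_self abs_mult)
    also have "\<dots> \<le> W * \<bar>x $ a - y $ a\<bar>"
      using assms by (rule mult_right_mono) simp
    finally show "w $ a * (x $ a - y $ a) \<le> W * \<bar>x $ a - y $ a\<bar>" .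
  qed
  also have "\<dots> = W * l1dist x y"
    by (simp add: l1dist_def sum_distrib_left)
  finally show ?thesis .
qed

lemma extreme_point_maximizes_inner:
  fixes S :: "'a::euclidean_space set"
  assumes "compact S" "convex S" "S \<noteq> {}"
  obtains e where "e extreme_point_of S" "\<And>y. y \<in> S \<Longrightarrow> c \<bullet> y \<le> c \<bullet> e"
proof -
  have "continuous_on S (\<lambda>y. c \<bullet> y)"
    by (intro continuous_intros)
  then obtain p where "p \<in> S" and p_max: "\<forall>y\<in>S. c \<bullet> y \<le> c \<bullet> p"
    using continuous_attains_sup[OF assms(1,3)] by blast
  define F where "F = S \<inter> {y. c \<bullet> y = c \<bullet> p}"
  have F_face: "F face_of S"
    unfolding F_def using assms(2) p_max by (intro face_of_Int_supporting_hyperplane_le) auto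
  have "compact F" "convex F" "F \<noteq> {}"
    unfolding F_def using assms \<open>p \<in> S\<close>
    by (auto intro: compact_Int_closed closed_hyperplane convex_Int convex_hyperplane)
  then obtain e where "e extreme_point_of F"
    by (rule extreme_point_exists_convex)
  then show thesis
    using that extreme_point_of_face[OF F_face] p_max unfolding F_def by auto
qed

lemma approx_extreme_point_near_max:
  fixes uf :: "'k \<Rightarrow> 'z \<Rightarrow> 'a::finite \<Rightarrow> 'f::{finite,linorder} \<Rightarrow> real"
  assumes E: "approx_extreme_points uf z \<delta> Ez" and "x0 \<in> mixed"
    and w_bound: "\<And>a. \<bar>w $ a\<bar> \<le> W" and "\<delta> \<ge> 0"
  shows "\<exists>x\<in>Ez. (\<forall>k. br (uf k) z x = br (uf k) z x0) \<and> w \<bullet> x0 - w \<bullet> x \<le> W * \<delta>"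
proof -
  define R where "R = cbr_region uf z (\<lambda>k. br (uf k) z x0)"
  have "x0 \<in> R"
    unfolding R_def using \<open>x0 \<in> mixed\<close> by (rule mem_cbr_region_br)
  have br_R: "\<And>x k. x \<in> R \<Longrightarrow> br (uf k) z x = br (uf k) z x0"
    unfolding R_def by (rule br_eq_if_mem_cbr_region)
  have "compact (closure R)" "convex (closure R)" "closure R \<noteq> {}"
    using \<open>x0 \<in> R\<close> unfolding R_def
    by (auto intro: bounded_cbr_region convex_closure convex_cbr_region)
  then obtain e where e_extreme: "e extreme_point_of closure R"
    and e_max: "\<And>y. y \<in> closure R \<Longrightarrow> w \<bullet> y \<le> w \<bullet> e"
    using extreme_point_maximizes_inner[of "closure R" w] by blast
  have "w \<bullet> x0 \<le> w \<bullet> e"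
    using e_max closure_subset \<open>x0 \<in> R\<close> by blast
  have "W \<ge> 0"
    using w_bound by (meson abs_ge_zero order_trans)
  then have "W * \<delta> \<ge> 0"
    using \<open>\<delta> \<ge> 0\<close> by simp
  have e_approx: "(e \<in> R \<longrightarrow> e \<in> Ez) \<and> (e \<notin> R \<longrightarrow> (\<exists>x\<in>Ez \<inter> R. l1dist x e \<le> \<delta>))"
    using E e_extreme \<open>x0 \<in> R\<close> unfolding approx_extreme_points_def R_def by blast
  show ?thesis
  proof (cases "e \<in> R")
    case True
    then show ?thesis
      using e_approx br_R \<open>w \<bullet> x0 \<le> w \<bullet> e\<close> \<open>W * \<delta> \<ge> 0\<close>
      by (intro bexI[of _ e]) auto
  next
    case False
    then obtain x where "x \<in> Ez" "x \<in> R" and "l1dist x e \<le> \<delta>"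
      using e_approx by blast
    have "w \<bullet> e - w \<bullet> x \<le> W * l1dist e x"
      using w_bound by (rule inner_diff_le_l1dist)
    also have "\<dots> \<le> W * \<delta>"
      using \<open>l1dist x e \<le> \<delta>\<close> \<open>W \<ge> 0\<close> by (simp add: l1dist_commute mult_left_mono)
    finally show ?thesis
      using \<open>x \<in> Ez\<close> br_R[OF \<open>x \<in> R\<close>] \<open>w \<bullet> x0 \<le> w \<bullet> e\<close>
      by (intro bexI[of _ x]) auto
  qed
qed

lemma expectation_eu_diff:
  fixes p :: "'k::finite pmf"
  shows "measure_pmf.expectation p (\<lambda>k. eu v z x (\<sigma> k) - eu v z y (\<sigma> k))
       = (\<chi> a. measure_pmf.expectation p (\<lambda>k. v z a (\<sigma> k))) \<bullet> (x - y)"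
proof -
  have "measure_pmf.expectation p (\<lambda>k. eu v z x (\<sigma> k) - eu v z y (\<sigma> k))
      = (\<Sum>k\<in>UNIV. \<Sum>a\<in>UNIV. pmf p k * v z a (\<sigma> k) * (x $ a - y $ a))"
    by (simp add: integral_measure_pmf_real[of UNIV] eu_def sum_subtractf[symmetric]
        sum_distrib_left sum_distrib_right algebra_simps)
  also have "\<dots> = (\<Sum>a\<in>UNIV. \<Sum>k\<in>UNIV. pmf p k * v z a (\<sigma> k) * (x $ a - y $ a))"
    by (rule sum.swap)
  also have "\<dots> = (\<chi> a. measure_pmf.expectation p (\<lambda>k. v z a (\<sigma> k))) \<bullet> (x - y)"
    by (simp add: integral_measure_pmf_real[of UNIV] inner_vec_def sum_distrib_left mult_ac)
  finally show ?thesis .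
qed

lemma abs_expectation_le:
  fixes p :: "'k::finite pmf" and g :: "'k \<Rightarrow> real"
  assumes "\<And>k. \<bar>g k\<bar> \<le> c"
  shows "\<bar>measure_pmf.expectation p g\<bar> \<le> c"
proof -
  have "integrable (measure_pmf p) g"
    by (rule integrable_measure_pmf_finite) simp
  then have "measure_pmf.expectation p g \<le> c" "- c \<le> measure_pmf.expectation p g"
    using assms
    by (auto intro!: measure_pmf.integral_le_const measure_pmf.integral_ge_const AE_I2
        simp: abs_le_iff minus_le_iff)
  then show ?thesis
    by (simp add: abs_le_iff)
qed

lemma sum_le_card_mult_by_fibres:
  fixes f :: "'i \<Rightarrow> real" and c :: real
  assumes "finite I"
    and fibre_le: "\<And>z. z \<in> g ` I \<Longrightarrow> (\<Sum>t\<in>{t\<in>I. g t = z}. f t) \<le> real (card {t\<in>I. g t = z}) * c"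
  shows "(\<Sum>t\<in>I. f t) \<le> real (card I) * c"
proof -
  have "(\<Sum>t\<in>I. f t) = (\<Sum>z\<in>g ` I. \<Sum>t\<in>{t\<in>I. g t = z}. f t)"
    using \<open>finite I\<close> by (simp add: sum.group)
  also have "\<dots> \<le> (\<Sum>z\<in>g ` I. real (card {t\<in>I. g t = z}) * c)"
    by (rule sum_mono) (rule fibre_le)
  also have "\<dots> = (\<Sum>z\<in>g ` I. \<Sum>t\<in>{t\<in>I. g t = z}. c)"
    by simp
  also have "\<dots> = (\<Sum>t\<in>I. c)"
    by (rule sum.group) (use \<open>finite I\<close> in auto)
  finally show ?thesis
    by simp
qed

lemma exists_policy_on_approx_extreme_points:
  fixes Z :: "'z set"
    and u :: "'z \<Rightarrow> 'a::finite \<Rightarrow> 'f::{finite,linorder} \<Rightarrow> real"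
    and uf :: "'k::finite \<Rightarrow> 'z \<Rightarrow> 'a \<Rightarrow> 'f \<Rightarrow> real"
    and ps :: "'i \<Rightarrow> 'k pmf"
  assumes u_bound: "\<forall>z\<in>Z. \<forall>a af. \<bar>u z a af\<bar> \<le> 1"
    and "\<delta> \<ge> 0"
    and E_approx: "\<forall>z\<in>Z. approx_extreme_points uf z \<delta> (E z)"
    and "finite I"
    and zs: "\<forall>t\<in>I. zs t \<in> Z"
    and \<pi>: "\<forall>z\<in>Z. \<pi> z \<in> mixed"
  shows "\<exists>\<pi>E. (\<forall>z\<in>Z. \<pi>E z \<in> E z) \<and>
    (\<Sum>t\<in>I. measure_pmf.expectation (ps t) (\<lambda>k.
        eu u (zs t) (\<pi> (zs t)) (br (uf k) (zs t) (\<pi> (zs t)))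
      - eu u (zs t) (\<pi>E (zs t)) (br (uf k) (zs t) (\<pi>E (zs t))))) \<le> real (card I) * \<delta>"
proof -
  define S where "S z = {t \<in> I. zs t = z}" for z
  define w where "w z = (\<Sum>t\<in>S z. \<chi> a. measure_pmf.expectation (ps t) (\<lambda>k. u z a (br (uf k) z (\<pi> z))))"
    for z
  have w_bound: "\<bar>w z $ a\<bar> \<le> real (card (S z))" if "z \<in> Z" for z a
  proof -
    have "\<bar>w z $ a\<bar> \<le> (\<Sum>t\<in>S z. \<bar>measure_pmf.expectation (ps t) (\<lambda>k. u z a (br (uf k) z (\<pi> z)))\<bar>)"
      unfolding w_def by (simp add: sum_abs)
    also have "\<dots> \<le> (\<Sum>t\<in>S z. 1)"
      using u_bound \<open>z \<in> Z\<close> by (intro sum_mono abs_expectation_le) blast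
    finally show ?thesis
      by simp
  qed
  have "\<forall>z\<in>Z. \<exists>x. x \<in> E z \<and> (\<forall>k. br (uf k) z x = br (uf k) z (\<pi> z)) \<and>
      w z \<bullet> \<pi> z - w z \<bullet> x \<le> real (card (S z)) * \<delta>"
    using approx_extreme_point_near_max[OF bspec[OF E_approx] bspec[OF \<pi>] w_bound \<open>\<delta> \<ge> 0\<close>]
    by blast
  then obtain \<pi>E where \<pi>E: "\<forall>z\<in>Z. \<pi>E z \<in> E z \<and> (\<forall>k. br (uf k) z (\<pi>E z) = br (uf k) z (\<pi> z)) \<and>
      w z \<bullet> \<pi> z - w z \<bullet> \<pi>E z \<le> real (card (S z)) * \<delta>"
    by (auto dest: bchoice)
  define loss where "loss t = measure_pmf.expectation (ps t) (\<lambda>k.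
        eu u (zs t) (\<pi> (zs t)) (br (uf k) (zs t) (\<pi> (zs t)))
      - eu u (zs t) (\<pi>E (zs t)) (br (uf k) (zs t) (\<pi>E (zs t))))" for t
  have fibre_loss: "(\<Sum>t\<in>S z. loss t) \<le> real (card (S z)) * \<delta>" if "z \<in> zs ` I" for z
  proof -
    have "z \<in> Z"
      using that zs by blast
    have "loss t = (\<chi> a. measure_pmf.expectation (ps t) (\<lambda>k. u z a (br (uf k) z (\<pi> z)))) \<bullet> (\<pi> z - \<pi>E z)"
      if "t \<in> S z" for t
      using that \<pi>E \<open>z \<in> Z\<close> unfolding loss_def S_def by (simp add: expectation_eu_diff)
    then have "(\<Sum>t\<in>S z. loss t) = w z \<bullet> (\<pi> z - \<pi>E z)"
      unfolding w_def by (simp add: inner_sum_left)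
    then show ?thesis
      using \<pi>E \<open>z \<in> Z\<close> by (simp add: inner_diff_right)
  qed
  have "(\<Sum>t\<in>I. loss t) \<le> real (card I) * \<delta>"
    using \<open>finite I\<close> fibre_loss unfolding S_def by (rule sum_le_card_mult_by_fibres)
  then show ?thesis
    using \<pi>E unfolding loss_def by blast
qed

theorem mainTheorem2:
  fixes Z :: "(real ^ 'd) set"
    and u :: "real ^ 'd \<Rightarrow> 'a::finite \<Rightarrow> 'f::{finite,linorder} \<Rightarrow> real"
    and uf :: "'k::finite \<Rightarrow> real ^ 'd \<Rightarrow> 'a \<Rightarrow> 'f \<Rightarrow> real"
    and T :: nat and \<delta> :: real
    and E :: "real ^ 'd \<Rightarrow> (real ^ 'a) set"
  assumes u_range: "\<forall>z\<in>Z. \<forall>a af. 0 \<le> u z a af \<and> u z a af \<le> 1"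
    and uf_range: "\<forall>k. \<forall>z\<in>Z. \<forall>a af. 0 \<le> uf k z a af \<and> uf k z a af \<le> 1"
    and delta_pos: "\<delta> > 0"
    and delta_le: "\<delta> \<le> 1 / real T"
    and E_approx: "\<forall>z\<in>Z. approx_extreme_points uf z \<delta> (E z)"
  shows "(\<forall>(zs :: nat \<Rightarrow> real ^ 'd) (fs :: nat \<Rightarrow> 'k) (\<pi> :: real ^ 'd \<Rightarrow> real ^ 'a).
            (\<forall>t\<in>{1..T}. zs t \<in> Z) \<and> (\<forall>z\<in>Z. \<pi> z \<in> mixed) \<longrightarrow>
            (\<exists>\<pi>E :: real ^ 'd \<Rightarrow> real ^ 'a. (\<forall>z\<in>Z. \<pi>E z \<in> E z) \<and>
               (\<Sum>t=1..T. eu u (zs t) (\<pi> (zs t)) (br (uf (fs t)) (zs t) (\<pi> (zs t)))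
                        - eu u (zs t) (\<pi>E (zs t)) (br (uf (fs t)) (zs t) (\<pi>E (zs t)))) \<le> 1))
       \<and>
       (\<forall>(F :: 'k pmf) (zs :: nat \<Rightarrow> real ^ 'd) (\<pi> :: real ^ 'd \<Rightarrow> real ^ 'a).
            (\<forall>t\<in>{1..T}. zs t \<in> Z) \<and> (\<forall>z\<in>Z. \<pi> z \<in> mixed) \<longrightarrow>
            (\<exists>\<pi>E :: real ^ 'd \<Rightarrow> real ^ 'a. (\<forall>z\<in>Z. \<pi>E z \<in> E z) \<and>
               (\<Sum>t=1..T. measure_pmf.expectation F (\<lambda>f.
                   eu u (zs t) (\<pi> (zs t)) (br (uf f) (zs t) (\<pi> (zs t)))
                 - eu u (zs t) (\<pi>E (zs t)) (br (uf f) (zs t) (\<pi>E (zs t))))) \<le> 1))"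
proof -
  have "real T * \<delta> \<le> 1"
    using delta_le delta_pos by (cases "T = 0") (simp_all add: field_simps)
  have u_bound: "\<forall>z\<in>Z. \<forall>a af. \<bar>u z a af\<bar> \<le> 1"
    using u_range by fastforce
  note policy = exists_policy_on_approx_extreme_points[where I = "{1..T}",
      OF u_bound less_imp_le[OF delta_pos] E_approx finite_atLeastAtMost]
  show ?thesis
    apply (intro conjI allI impI; elim conjE)
    subgoal premises in_Z for zs fs \<pi>
      using policy[where ps = "\<lambda>t. return_pmf (fs t)", OF in_Z] \<open>real T * \<delta> \<le> 1\<close>
      by (simp, meson order_trans)
    subgoal premises in_Z for F zs \<pi>
      using policy[where ps = "\<lambda>_. F", OF in_Z] \<open>real T * \<delta> \<le> 1\<close>
      by (simp, meson order_trans)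
    done
qed

end
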